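(* Let $\Omega\subset\mathbb{R}^n$ be a convex open set and let $c:\Omega\times\mathbb{S}^n_-\to\mathbb{R}$, $c(x,\bar y)=\frac{\langle x,y\rangle}{y_{n+1}}$. Then $c$ is bi-Twisted, and for any $x\in\Omega$ and $p\in\mathbb{R}^n$, $$\mathrm{c\text{-}exp}_x(p)=\Big(\frac{p}{\sqrt{1+|p|^2}},-\frac{1}{\sqrt{1+|p|^2}}\Big).$$
   Context: Points of $\mathbb{S}^n\subset\mathbb{R}^{n+1}$ are written $\bar y=(y,y_{n+1})$ with $y\in\mathbb{R}^n$, and $\mathbb{S}^n_-=\{\bar y\in\mathbb{S}^n\mid y_{n+1}<0\}$. A smooth cost $c$ on $\Omega\times\mathbb{S}^n_-$ is bi-Twisted if for every $x_0\in\Omega$ and $\bar y_0\in\mathbb{S}^n_-$ the maps $\mathbb{S}^n_-\ni\bar y\mapsto -D_xc(x_0,\bar y)\in\mathbb{R}^n$ and $\Omega\ni x\mapsto -D_{\bar y}c(x,\bar y_0)\in T^*_{\bar y_0}\mathbb{S}^n$ are $C^1$ diffeomorphisms (onto their images). The inverse of $\bar y\mapsto -D_xc(x,\bar y)$ is the $c$-exponential map $\mathrm{c\text{-}exp}_x(\cdot)$. *)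

theory Defs
  imports "HOL-Analysis.Analysis"
begin

text \<open>Points of the sphere S^n in R^(n+1) are pairs (y, y_(n+1)) with y :: real^'n.
  The product norm is the Euclidean norm of R^(n+1).\<close>

definition sphere_minus :: "((real^'n) \<times> real) set" where
  "sphere_minus = {z. norm z = 1 \<and> snd z < 0}"

definition cost :: "real^'n \<Rightarrow> (real^'n) \<times> real \<Rightarrow> real" where
  "cost x z = inner x (fst z) / snd z"

text \<open>C^1 on a (possibly lower-dimensional) subset S: locally the restriction of a
  C^1 map defined on an open set of the ambient space.\<close>
definition C1_on :: "'a::real_normed_vector set \<Rightarrow> ('a \<Rightarrow> 'b::real_normed_vector) \<Rightarrow> bool" where
  "C1_on S f \<longleftrightarrow> (\<forall>z\<in>S. \<exists>U g (g' :: 'a \<Rightarrow> ('a \<Rightarrow>\<^sub>L 'b)). open U \<and> z \<in> U \<and>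
      (\<forall>u\<in>U. (g has_derivative blinfun_apply (g' u)) (at u)) \<and> continuous_on U g' \<and>
      (\<forall>u\<in>U \<inter> S. g u = f u))"

definition C1_diffeo_onto_image :: "('a::real_normed_vector \<Rightarrow> 'b::real_normed_vector) \<Rightarrow> 'a set \<Rightarrow> bool" where
  "C1_diffeo_onto_image f S \<longleftrightarrow> inj_on f S \<and> C1_on S f \<and> C1_on (f ` S) (the_inv_into S f)"

text \<open>D_x c(x0, ybar): the gradient in x (covectors of R^n identified with R^n).\<close>
definition Dx :: "(real^'n \<Rightarrow> (real^'n) \<times> real \<Rightarrow> real) \<Rightarrow> real^'n \<Rightarrow> (real^'n) \<times> real \<Rightarrow> real^'n" where
  "Dx c x0 z = (THE v. ((\<lambda>x. c x z) has_derivative (\<lambda>h. inner v h)) (at x0))"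

text \<open>D_ybar c(x, ybar0) in T*_{ybar0} S^n, identified (via the inner product) with the
  tangent space {w. <w, ybar0> = 0}: the intrinsic (Riemannian) gradient along the sphere.\<close>
definition Dybar :: "(real^'n \<Rightarrow> (real^'n) \<times> real \<Rightarrow> real) \<Rightarrow> real^'n \<Rightarrow> (real^'n) \<times> real \<Rightarrow> (real^'n) \<times> real" where
  "Dybar c x z0 = (THE v. inner v z0 = 0 \<and>
     (\<exists>L. ((\<lambda>z. c x z) has_derivative L) (at z0 within sphere_minus) \<and>
          (\<forall>w. inner w z0 = 0 \<longrightarrow> L w = inner v w)))"

definition bi_twisted :: "(real^'n) set \<Rightarrow> (real^'n \<Rightarrow> (real^'n) \<times> real \<Rightarrow> real) \<Rightarrow> bool" where
  "bi_twisted \<Omega> c \<longleftrightarrow>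
     (\<forall>x0\<in>\<Omega>. C1_diffeo_onto_image (\<lambda>z. - Dx c x0 z) sphere_minus) \<and>
     (\<forall>z0\<in>sphere_minus. C1_diffeo_onto_image (\<lambda>x. - Dybar c x z0) \<Omega>)"

definition c_exp :: "(real^'n \<Rightarrow> (real^'n) \<times> real \<Rightarrow> real) \<Rightarrow> real^'n \<Rightarrow> real^'n \<Rightarrow> (real^'n) \<times> real" where
  "c_exp c x p = the_inv_into sphere_minus (\<lambda>z. - Dx c x z) p"

end

theory Submission
  imports Defs
begin

text \<open>The cost is linear in x, so D_x c(x, ybar) = y / y_(n+1) does not depend on x, and
  ybar \<mapsto> -D_x c(x, ybar) is the gnomonic projection of the lower hemisphere from the origin onto
  the plane y_(n+1) = -1; its inverse p \<mapsto> (p, -1) / sqrt (1 + |p|^2) is the claimed c-exp.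
  For fixed ybar0 the map x \<mapsto> -D_ybar c(x, ybar0) is linear and injective, hence a diffeomorphism
  onto its image. The one non-formal point is that the gradient along the sphere is well defined:
  every tangent vector w at z0 is the velocity of the normalised line (z0 + s w) / |z0 + s w|,
  so all derivatives within the sphere agree on w.\<close>

lemma C1_onI:
  fixes g :: "'a::euclidean_space \<Rightarrow> 'b::real_normed_vector"
  assumes "open U" "S \<subseteq> U"
    and der: "\<And>u. u \<in> U \<Longrightarrow> (g has_derivative D u) (at u)"
    and cont: "\<And>i. i \<in> Basis \<Longrightarrow> continuous_on U (\<lambda>u. D u i)"
    and eq: "\<And>u. u \<in> S \<Longrightarrow> g u = f u"
  shows "C1_on S f"
proof -
  have D: "\<And>u. u \<in> U \<Longrightarrow> blinfun_apply (Blinfun (D u)) = D u"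
    using der by (metis bounded_linear_Blinfun_apply has_derivative_bounded_linear)
  have "continuous_on U (\<lambda>u. Blinfun (D u))"
  proof (rule continuous_on_blinfun_componentwise)
    fix i :: 'a assume "i \<in> Basis"
    show "continuous_on U (\<lambda>u. blinfun_apply (Blinfun (D u)) i)"
      using cont[OF \<open>i \<in> Basis\<close>] by (rule continuous_on_eq) (simp add: D)
  qed
  moreover have "\<forall>u\<in>U. (g has_derivative blinfun_apply (Blinfun (D u))) (at u)"
    using der D by simp
  ultimately show ?thesis
    unfolding C1_on_def
    by (intro ballI exI[of _ U] exI[of _ g] exI[of _ "\<lambda>u. Blinfun (D u)"]) (use assms in auto)
qed

lemma C1_on_linear:
  fixes f :: "'a::euclidean_space \<Rightarrow> 'b::real_normed_vector"
  assumes "linear f"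
  shows "C1_on S f"
  using assms
  by (intro C1_onI[where U = UNIV and g = f and D = "\<lambda>_. f"])
     (auto simp: linear_conv_bounded_linear bounded_linear.has_derivative[OF _ has_derivative_ident])

lemma C1_on_cong:
  assumes "C1_on S f" "\<And>u. u \<in> S \<Longrightarrow> f u = g u"
  shows "C1_on S g"
  using assms unfolding C1_on_def by (metis IntD2)

lemma C1_diffeo_onto_imageI:
  assumes "inj_on f S" "C1_on S f" "C1_on (f ` S) g" "\<And>x. x \<in> S \<Longrightarrow> g (f x) = x"
  shows "C1_diffeo_onto_image f S"
  unfolding C1_diffeo_onto_image_def
proof (intro conjI)
  show "C1_on (f ` S) (the_inv_into S f)"
    using assms(3) by (rule C1_on_cong) (auto simp: assms(1,4) the_inv_into_f_f)
qed (use assms in auto)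

lemma C1_diffeo_onto_image_linear:
  fixes f :: "'a::euclidean_space \<Rightarrow> 'b::euclidean_space"
  assumes "linear f" "inj f"
  shows "C1_diffeo_onto_image f S"
proof -
  obtain g where "linear g" "g \<circ> f = id"
    using linear_injective_left_inverse[OF assms] by blast
  then show ?thesis
    using assms by (intro C1_diffeo_onto_imageI C1_on_linear) (auto simp: inj_on_def pointfree_idE)
qed

lemma has_derivative_within_sphere_tangent_unique:
  fixes f :: "'a::real_inner \<Rightarrow> 'b::real_normed_vector"
  assumes "open U" "z0 \<in> U" "norm z0 = 1" "inner w z0 = 0"
    and L1: "(f has_derivative L1) (at z0 within sphere 0 1 \<inter> U)"
    and L2: "(f has_derivative L2) (at z0 within sphere 0 1 \<inter> U)"
  shows "L1 w = L2 w"
proof -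
  define \<gamma> where "\<gamma> s = (1 / norm (z0 + s *\<^sub>R w)) *\<^sub>R (z0 + s *\<^sub>R w)" for s :: real
  have norm_line: "norm (z0 + s *\<^sub>R w) = sqrt (1 + s\<^sup>2 * (norm w)\<^sup>2)" for s
  proof -
    have "orthogonal z0 (s *\<^sub>R w)"
      using assms(4) by (simp add: orthogonal_def inner_commute)
    then have "(norm (z0 + s *\<^sub>R w))\<^sup>2 = 1 + s\<^sup>2 * (norm w)\<^sup>2"
      using assms(3) by (simp add: norm_add_Pythagorean power_mult_distrib)
    then show ?thesis
      by (metis norm_ge_zero real_sqrt_unique)
  qed
  have pos: "0 < 1 + s\<^sup>2 * (norm w)\<^sup>2" for s :: real
    by (intro add_pos_nonneg) auto
  have \<gamma>_eq: "\<gamma> = (\<lambda>s. (1 / sqrt (1 + s\<^sup>2 * (norm w)\<^sup>2)) *\<^sub>R (z0 + s *\<^sub>R w))"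
    by (simp add: \<gamma>_def norm_line fun_eq_iff)
  have \<gamma>_sphere: "\<gamma> s \<in> sphere 0 1" for s
    using pos[of s] by (simp add: \<gamma>_def norm_line)
  have "continuous_on UNIV \<gamma>"
    unfolding \<gamma>_eq by (intro continuous_intros) (simp add: pos less_imp_neq[symmetric])
  then have "open (\<gamma> -` U)"
    using \<open>open U\<close> by (simp add: open_vimage)
  moreover have "0 \<in> \<gamma> -` U" "\<gamma> 0 = z0"
    using assms(2,3) by (simp_all add: \<gamma>_def)
  moreover have "(\<gamma> has_derivative (\<lambda>s. s *\<^sub>R w)) (at 0)"
    unfolding \<gamma>_eq by (rule derivative_eq_intros refl | simp add: pos less_imp_neq[symmetric])+
  ultimately have "((f \<circ> \<gamma>) has_derivative (L \<circ> (\<lambda>s. s *\<^sub>R w))) (at 0)"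
    if "(f has_derivative L) (at z0 within sphere 0 1 \<inter> U)" for L
    using diff_chain_within[of \<gamma> _ 0 "\<gamma> -` U" f L] that \<gamma>_sphere
    by (metis (no_types, lifting) at_within_open has_derivative_subset image_subset_iff IntI vimageE)
  from has_derivative_unique[OF this[OF L1] this[OF L2]] show ?thesis
    by (metis comp_apply scaleR_one)
qed

lemma sphere_minus_eq: "sphere_minus = sphere 0 1 \<inter> {z. snd z < 0}"
  by (auto simp: sphere_minus_def)

lemma mem_sphere_minus_iff:
  "z \<in> sphere_minus \<longleftrightarrow> (norm (fst z))\<^sup>2 + (snd z)\<^sup>2 = 1 \<and> snd z < 0"
  by (cases z) (simp add: sphere_minus_def norm_Pair)

lemma Dx_cost: "Dx cost x0 z = (1 / snd z) *\<^sub>R fst z"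
proof -
  have grad: "((\<lambda>x. cost x z) has_derivative (\<lambda>h. inner ((1 / snd z) *\<^sub>R fst z) h)) (at x0)"
    unfolding cost_def by (auto intro!: derivative_eq_intros simp: inner_commute divide_inverse)
  show ?thesis
    unfolding Dx_def
  proof (rule the_equality)
    fix v assume "((\<lambda>x. cost x z) has_derivative (\<lambda>h. inner v h)) (at x0)"
    then have "inner v h = inner ((1 / snd z) *\<^sub>R fst z) h" for h
      using has_derivative_unique[OF _ grad] by metis
    then show "v = (1 / snd z) *\<^sub>R fst z"
      using vector_eq_rdot by blast
  qed (rule grad)
qed

lemma Dybar_cost:
  assumes z0: "z0 \<in> sphere_minus"
  shows "Dybar cost x z0 = ((1 / snd z0) *\<^sub>R x, - inner x (fst z0) / (snd z0)\<^sup>2)"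
proof -
  define G where "G = ((1 / snd z0) *\<^sub>R x, - inner x (fst z0) / (snd z0)\<^sup>2)"
  have "snd z0 \<noteq> 0"
    using z0 by (simp add: sphere_minus_def)
  then have grad: "((\<lambda>z. cost x z) has_derivative (\<lambda>w. inner G w)) (at z0)"
    and tangent: "inner G z0 = 0"
    unfolding cost_def G_def inner_prod_def
    by (auto intro!: derivative_eq_intros simp: field_simps power2_eq_square)
  have unique: "v = G"
    if "inner v z0 = 0" and L: "((\<lambda>z. cost x z) has_derivative L) (at z0 within sphere_minus)"
      and Lv: "\<And>w. inner w z0 = 0 \<Longrightarrow> L w = inner v w" for v L
  proof -
    have "inner (v - G) z0 = 0"
      using that(1) tangent by (simp add: inner_diff_left)
    moreover have "open {z :: (real^'n) \<times> real. snd z < 0}"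
      by (intro open_Collect_less continuous_intros)
    moreover note L has_derivative_at_withinI[OF grad, of sphere_minus]
    ultimately have "L (v - G) = inner G (v - G)"
      using z0 unfolding sphere_minus_eq
      by (intro has_derivative_within_sphere_tangent_unique[of "{z. snd z < 0}"]) auto
    then have "inner (v - G) (v - G) = 0"
      using Lv[OF \<open>inner (v - G) z0 = 0\<close>] by (simp add: inner_diff_left)
    then show ?thesis by simp
  qed
  show ?thesis
    unfolding Dybar_def G_def[symmetric]
    using tangent has_derivative_at_withinI[OF grad] unique by (intro the_equality) blast+
qed

definition gnomonic :: "(real^'n) \<times> real \<Rightarrow> real^'n" where
  "gnomonic z = - (1 / snd z) *\<^sub>R fst z"

definition gnomonic_inv :: "real^'n \<Rightarrow> (real^'n) \<times> real" where
  "gnomonic_inv p = (1 / sqrt (1 + (norm p)\<^sup>2)) *\<^sub>R (p, - 1)"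

lemma neg_Dx_cost_eq_gnomonic: "(\<lambda>z. - Dx cost x z) = gnomonic"
  by (simp add: fun_eq_iff Dx_cost gnomonic_def)

lemma gnomonic_inv_in_sphere_minus: "gnomonic_inv p \<in> sphere_minus"
proof -
  have "0 < 1 + (norm p)\<^sup>2"
    by (intro add_pos_nonneg) auto
  then show ?thesis
    by (simp add: mem_sphere_minus_iff gnomonic_inv_def field_simps)
qed

lemma gnomonic_gnomonic_inv: "gnomonic (gnomonic_inv p) = p"
proof -
  have "0 < sqrt (1 + (norm p)\<^sup>2)"
    by (intro real_sqrt_gt_zero add_pos_nonneg) auto
  then show ?thesis
    by (simp add: gnomonic_def gnomonic_inv_def)
qed

lemma gnomonic_inv_gnomonic:
  assumes "z \<in> sphere_minus"
  shows "gnomonic_inv (gnomonic z) = z"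
proof (cases z)
  case (Pair y t)
  with assms have "(norm y)\<^sup>2 + t\<^sup>2 = 1" and "t < 0"
    by (auto simp: mem_sphere_minus_iff)
  then have "1 + (norm (gnomonic z))\<^sup>2 = 1 / t\<^sup>2"
    by (simp add: Pair gnomonic_def field_simps)
  then have "sqrt (1 + (norm (gnomonic z))\<^sup>2) = - 1 / t"
    using \<open>t < 0\<close> by (simp add: real_sqrt_divide)
  then show ?thesis
    using \<open>t < 0\<close> by (simp add: gnomonic_inv_def Pair gnomonic_def)
qed

lemma the_inv_into_gnomonic: "the_inv_into sphere_minus gnomonic p = gnomonic_inv p"
  by (metis the_inv_into_f_eq inj_onI gnomonic_inv_gnomonic gnomonic_gnomonic_inv
      gnomonic_inv_in_sphere_minus)

lemma C1_on_gnomonic: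
  fixes S :: "((real^'n) \<times> real) set"
  assumes "\<And>z. z \<in> S \<Longrightarrow> snd z \<noteq> 0"
  shows "C1_on S gnomonic"
proof (rule C1_onI[where U = "{z. snd z \<noteq> 0}" and g = gnomonic and
    D = "\<lambda>u h. - (1 / snd u) *\<^sub>R fst h + (snd h / (snd u)\<^sup>2) *\<^sub>R fst u"])
  show "open {z :: (real^'n) \<times> real. snd z \<noteq> 0}"
    by (intro open_Collect_neq continuous_intros)
  show "(gnomonic has_derivative (\<lambda>h. - (1 / snd u) *\<^sub>R fst h + (snd h / (snd u)\<^sup>2) *\<^sub>R fst u)) (at u)"
    if "u \<in> {z. snd z \<noteq> 0}" for u :: "(real^'n) \<times> real"
    using that unfolding gnomonic_def[abs_def]
    by (auto intro!: derivative_eq_intros simp: field_simps power2_eq_square)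
  show "continuous_on {z. snd z \<noteq> 0}
      (\<lambda>u. - (1 / snd u) *\<^sub>R fst h + (snd h / (snd u)\<^sup>2) *\<^sub>R fst u)" for h :: "(real^'n) \<times> real"
    by (intro continuous_intros) auto
qed (use assms in auto)

lemma C1_on_gnomonic_inv:
  fixes S :: "(real^'n) set"
  shows "C1_on S gnomonic_inv"
proof -
  define r where "r p = sqrt (1 + inner p p)" for p :: "real^'n"
  have r_pos: "0 < r p" for p
    unfolding r_def by (intro real_sqrt_gt_zero add_pos_nonneg) auto
  have r_cont: "continuous_on UNIV r"
    unfolding r_def by (intro continuous_intros)
  have dr: "(r has_derivative (\<lambda>h. inner u h / r u)) (at u)" for u
    unfolding r_def using r_pos[of u, unfolded r_def]
    by (auto intro!: derivative_eq_intros simp: fun_eq_iff inner_commute field_simps)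
  have "gnomonic_inv p = (1 / r p) *\<^sub>R (p, - 1)" for p
    by (simp add: gnomonic_inv_def r_def power2_norm_eq_inner)
  moreover have "((\<lambda>p. (1 / r p) *\<^sub>R (p, - 1)) has_derivative
      (\<lambda>h. (1 / r u) *\<^sub>R (h, 0 :: real) - (inner u h / r u ^ 3) *\<^sub>R (u, - 1))) (at u)" for u
    using r_pos[of u]
    by (auto intro!: derivative_eq_intros dr simp: field_simps power3_eq_cube)
  moreover have "continuous_on UNIV
      (\<lambda>u. (1 / r u) *\<^sub>R (h, 0 :: real) - (inner u h / r u ^ 3) *\<^sub>R (u, - 1))" for h
    using r_pos by (intro continuous_intros r_cont) (auto simp: less_imp_neq[symmetric])
  ultimately show ?thesis
    by (intro C1_onI[where U = UNIV]) auto
qed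

lemma C1_diffeo_onto_image_gnomonic: "C1_diffeo_onto_image gnomonic sphere_minus"
proof (rule C1_diffeo_onto_imageI)
  show "inj_on gnomonic sphere_minus"
    by (metis inj_onI gnomonic_inv_gnomonic)
  show "C1_on sphere_minus gnomonic"
    by (rule C1_on_gnomonic) (simp add: sphere_minus_def)
qed (auto intro: C1_on_gnomonic_inv gnomonic_inv_gnomonic)

lemma linear_neg_Dybar_cost:
  assumes "z0 \<in> sphere_minus"
  shows "linear (\<lambda>x. - Dybar cost x z0)"
  unfolding Dybar_cost[OF assms]
  by (intro linearI) (simp_all add: inner_add_left add_divide_distrib diff_divide_distrib scaleR_add_right)

lemma inj_neg_Dybar_cost:
  assumes "z0 \<in> sphere_minus"
  shows "inj (\<lambda>x. - Dybar cost x z0)"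
proof -
  have "snd z0 \<noteq> 0"
    using assms by (simp add: sphere_minus_def)
  then show ?thesis
    unfolding Dybar_cost[OF assms] by (intro injI) simp
qed

theorem proposition4p2:
  fixes \<Omega> :: "(real^'n) set"
  assumes "convex \<Omega>" and "open \<Omega>"
  shows "bi_twisted \<Omega> cost \<and>
    (\<forall>x\<in>\<Omega>. \<forall>p::real^'n.
       c_exp cost x p = ((1 / sqrt (1 + (norm p)\<^sup>2)) *\<^sub>R p, - 1 / sqrt (1 + (norm p)\<^sup>2)))"
proof -
  have "bi_twisted \<Omega> cost"
    unfolding bi_twisted_def neg_Dx_cost_eq_gnomonic
    by (auto intro: C1_diffeo_onto_image_gnomonic C1_diffeo_onto_image_linear
        linear_neg_Dybar_cost inj_neg_Dybar_cost)
  moreover have "c_exp cost x p = ((1 / sqrt (1 + (norm p)\<^sup>2)) *\<^sub>R p, - 1 / sqrt (1 + (norm p)\<^sup>2))"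
    for x p :: "real^'n"
    by (simp add: c_exp_def neg_Dx_cost_eq_gnomonic the_inv_into_gnomonic gnomonic_inv_def)
  ultimately show ?thesis
    by blast
qed

end
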